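(* For a $d$-regular simple graph ($d\ge3$) quantised with equi-transmitting scattering matrices, every $g\in G_2$ satisfies $$\|Mg\|_{\mathbb{C}^{2B}}=\frac{\|g\|_{\mathbb{C}^{2B}}}{d-1}.$$
   Context: For directed bond $b$, $o(b),t(b)$ are origin and terminus, $\bar b$ its reversal. For equi-transmitting quantisation, $M$ is the $2B\times2B$ matrix with $M_{bc}=\frac1{d-1}$ if $t(b)=o(c)$ and $c\ne\bar b$, and $0$ otherwise. $e_v\in\mathbb{C}^{2B}$ has component $1$ on each directed bond with origin $v$, $0$ elsewhere; $G_1=\mathrm{span}\{e_v\}$ and $G_2=G_1^{\perp}$ (orthogonal complement in $\mathbb{C}^{2B}$). *)

theory Defs
  imports Complex_Main
begin

text \<open>Vectors in C^{2B} are functions on directed bonds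
  (values outside the bond set are irrelevant).\<close>

definition simple_graph :: "'a set \<Rightarrow> ('a \<Rightarrow> 'a \<Rightarrow> bool) \<Rightarrow> bool" where
  "simple_graph V E \<longleftrightarrow> finite V \<and> (\<forall>u v. E u v \<longrightarrow> u \<in> V \<and> v \<in> V)
     \<and> (\<forall>u v. E u v \<longrightarrow> E v u) \<and> (\<forall>v. \<not> E v v)"

definition regular :: "'a set \<Rightarrow> ('a \<Rightarrow> 'a \<Rightarrow> bool) \<Rightarrow> nat \<Rightarrow> bool" where
  "regular V E d \<longleftrightarrow> (\<forall>v\<in>V. card {u\<in>V. E v u} = d)"

definition bonds :: "'a set \<Rightarrow> ('a \<Rightarrow> 'a \<Rightarrow> bool) \<Rightarrow> ('a \<times> 'a) set" where
  "bonds V E = {(u, v). u \<in> V \<and> v \<in> V \<and> E u v}"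

definition orig :: "'a \<times> 'a \<Rightarrow> 'a" where "orig b = fst b"
definition termi :: "'a \<times> 'a \<Rightarrow> 'a" where "termi b = snd b"
definition rev_bond :: "'a \<times> 'a \<Rightarrow> 'a \<times> 'a" where "rev_bond b = (snd b, fst b)"

definition Mmat :: "nat \<Rightarrow> 'a \<times> 'a \<Rightarrow> 'a \<times> 'a \<Rightarrow> complex" where
  "Mmat d b c = (if termi b = orig c \<and> c \<noteq> rev_bond b then 1 / (of_nat d - 1) else 0)"

definition Mapply :: "'a set \<Rightarrow> ('a \<Rightarrow> 'a \<Rightarrow> bool) \<Rightarrow> nat \<Rightarrow> ('a \<times> 'a \<Rightarrow> complex) \<Rightarrow> ('a \<times> 'a \<Rightarrow> complex)" where
  "Mapply V E d g = (\<lambda>b. \<Sum>c\<in>bonds V E. Mmat d b c * g c)"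

definition inner_bonds :: "'a set \<Rightarrow> ('a \<Rightarrow> 'a \<Rightarrow> bool) \<Rightarrow> ('a \<times> 'a \<Rightarrow> complex) \<Rightarrow> ('a \<times> 'a \<Rightarrow> complex) \<Rightarrow> complex" where
  "inner_bonds V E g h = (\<Sum>b\<in>bonds V E. g b * cnj (h b))"

definition norm_bonds :: "'a set \<Rightarrow> ('a \<Rightarrow> 'a \<Rightarrow> bool) \<Rightarrow> ('a \<times> 'a \<Rightarrow> complex) \<Rightarrow> real" where
  "norm_bonds V E g = sqrt (\<Sum>b\<in>bonds V E. (cmod (g b))\<^sup>2)"

definition e_vec :: "'a \<Rightarrow> 'a \<times> 'a \<Rightarrow> complex" where
  "e_vec v = (\<lambda>b. if orig b = v then 1 else 0)"

definition G1 :: "'a set \<Rightarrow> ('a \<times> 'a \<Rightarrow> complex) set" where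
  "G1 V = {h. \<exists>c. h = (\<lambda>b. \<Sum>v\<in>V. c v * e_vec v b)}"

definition G2 :: "'a set \<Rightarrow> ('a \<Rightarrow> 'a \<Rightarrow> bool) \<Rightarrow> ('a \<times> 'a \<Rightarrow> complex) set" where
  "G2 V E = {g. \<forall>h\<in>G1 V. inner_bonds V E g h = 0}"

end

theory Submission
  imports Defs
begin

text \<open>For g orthogonal to every e_v the outgoing values of g sum to zero at each vertex, so the
  row of M at b picks up exactly the negative of the reversed value:
  Mg(b) = -g(rev b)/(d-1).  Reversal is a permutation of the bonds, hence Mg is a rescaled
  permutation of g.\<close>

lemma finite_bonds: "finite V \<Longrightarrow> finite (bonds V E)"
  by (rule finite_subset[of _ "V \<times> V"]) (auto simp: bonds_def)

lemma rev_bond_in_bonds: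
  assumes "simple_graph V E" and "b \<in> bonds V E"
  shows "rev_bond b \<in> bonds V E"
  using assms by (auto simp: bonds_def rev_bond_def simple_graph_def)

lemma rev_bond_rev_bond [simp]: "rev_bond (rev_bond b) = b"
  by (simp add: rev_bond_def)

lemma bij_betw_rev_bond:
  assumes "simple_graph V E"
  shows "bij_betw rev_bond (bonds V E) (bonds V E)"
  by (rule bij_betw_byWitness[where f'=rev_bond]) (auto intro: rev_bond_in_bonds[OF assms])

lemma e_vec_in_G1:
  assumes "finite V" and "w \<in> V"
  shows "e_vec w \<in> G1 V"
proof -
  have "e_vec w = (\<lambda>b. \<Sum>v\<in>V. (if v = w then 1 else 0) * e_vec v b)"
    using assms by (simp add: if_distrib[where f="\<lambda>x. x * _"] sum.delta cong: if_cong)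
  then show ?thesis unfolding G1_def by (intro CollectI exI)
qed

lemma G2_sum_outgoing_eq_0:
  assumes "finite V" and "w \<in> V" and "g \<in> G2 V E"
  shows "(\<Sum>c\<in>{c\<in>bonds V E. orig c = w}. g c) = 0"
proof -
  have "inner_bonds V E g (e_vec w) = 0"
    using assms e_vec_in_G1[OF assms(1,2)] by (simp add: G2_def)
  moreover have "inner_bonds V E g (e_vec w) = (\<Sum>c\<in>bonds V E. if orig c = w then g c else 0)"
    unfolding inner_bonds_def by (rule sum.cong) (auto simp: e_vec_def)
  ultimately show ?thesis
    using finite_bonds[OF assms(1)] by (simp add: sum.inter_filter)
qed

lemma Mapply_G2:
  assumes "simple_graph V E" and "g \<in> G2 V E" and b: "b \<in> bonds V E"
  shows "Mapply V E d g b = - g (rev_bond b) / (of_nat d - 1)"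
proof -
  define k :: complex where "k = 1 / (of_nat d - 1)"
  have finV: "finite V" using assms(1) by (simp add: simple_graph_def)
  let ?S = "{c\<in>bonds V E. orig c = termi b}"
  have fin: "finite (bonds V E)" using finite_bonds[OF finV] .
  have "rev_bond b \<in> ?S"
    using rev_bond_in_bonds[OF assms(1) b] by (simp add: orig_def termi_def rev_bond_def)
  have "termi b \<in> V"
    using b by (auto simp: bonds_def termi_def)
  have "Mapply V E d g b = (\<Sum>c\<in>bonds V E. if c \<in> ?S - {rev_bond b} then k * g c else 0)"
    unfolding Mapply_def Mmat_def k_def by (rule sum.cong) auto
  also have "\<dots> = (\<Sum>c\<in>?S - {rev_bond b}. k * g c)"
    using fin by (simp add: sum.If_cases) (rule sum.cong, auto)
  also have "\<dots> = k * ((\<Sum>c\<in>?S. g c) - g (rev_bond b))"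
    using fin \<open>rev_bond b \<in> ?S\<close> by (simp add: sum_distrib_left[symmetric] sum_diff1 right_diff_distrib)
  also have "\<dots> = - k * g (rev_bond b)"
    using G2_sum_outgoing_eq_0[OF finV \<open>termi b \<in> V\<close> assms(2)] by simp
  finally show ?thesis by (simp add: k_def)
qed

lemma norm_bonds_scale:
  "norm_bonds V E (\<lambda>b. c * g b) = cmod c * norm_bonds V E g"
  by (simp add: norm_bonds_def norm_mult power_mult_distrib sum_distrib_left[symmetric]
      real_sqrt_mult)

lemma norm_bonds_comp_rev_bond:
  assumes "simple_graph V E"
  shows "norm_bonds V E (g \<circ> rev_bond) = norm_bonds V E g"
  using sum.reindex_bij_betw[OF bij_betw_rev_bond[OF assms], of "\<lambda>b. (cmod (g b))\<^sup>2"]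
  by (simp add: norm_bonds_def)

theorem lemma10:
  fixes V :: "'a set" and E :: "'a \<Rightarrow> 'a \<Rightarrow> bool" and d :: nat
    and g :: "'a \<times> 'a \<Rightarrow> complex"
  assumes "simple_graph V E" and "regular V E d" and "d \<ge> 3"
    and "g \<in> G2 V E"
  shows "norm_bonds V E (Mapply V E d g) = norm_bonds V E g / (real d - 1)"
proof -
  define k :: complex where "k = - 1 / (of_nat d - 1)"
  have "norm_bonds V E (Mapply V E d g) = norm_bonds V E (\<lambda>b. k * (g \<circ> rev_bond) b)"
    unfolding norm_bonds_def using Mapply_G2[OF assms(1,4)] by (simp add: k_def)
  also have "\<dots> = cmod k * norm_bonds V E g"
    by (simp only: norm_bonds_scale norm_bonds_comp_rev_bond[OF assms(1)])
  also have "cmod k = 1 / (real d - 1)"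
  proof -
    have "(of_nat d - 1 :: complex) = of_real (real d - 1)" by simp
    then show ?thesis using assms(3) by (simp add: k_def norm_divide del: of_real_diff)
  qed
  finally show ?thesis by simp
qed

end
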